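(* In the setting below, under the tight disturbance bound assumption and the persistent excitation assumption, the minimal parameter set $\Theta_t=\Theta_0\cap\bigcap_{j=1}^t\Delta_j$ converges to $\{\theta^\ast\}$ with probability 1; that is, with probability 1, $\bigcap_{t\ge0}\Theta_t=\{\theta^\ast\}$.
   Context: Setting: $\theta^\ast\in\mathbb{R}^p$ is a fixed (unknown) parameter vector. $\Theta_0\subset\mathbb{R}^p$ is a compact convex polytope containing $\theta^\ast$. $\mathcal{W}=\{w\in\mathbb{R}^{n_x}:\Pi_w w\le\pi_w\}$ is a compact convex polytope with $\pi_w>0$. The disturbances $w_0,w_1,\dots$ are independent random vectors with $w_t\in\mathcal{W}$ for all $t$. $D_0,D_1,\dots\in\mathbb{R}^{n_x\times p}$ is a given (non-random) sequence of regressor matrices. For $t\ge1$ the (random) unfalsified parameter set is $\Delta_t=\{\theta\in\mathbb{R}^p: D_{t-1}(\theta^\ast-\theta)+w_{t-1}\in\mathcal{W}\}$. $\|\cdot\|$ is the Euclidean norm (induced 2-norm for matrices); $\partial\mathcal{W}$ is the boundary of $\mathcal{W}$. Tight disturbance bound assumption: there is a function $p_w:(0,\infty)\to(0,1]$ such that for all $w^0\in\partial\mathcal{W}$, all $\epsilon>0$ and all $t\ge0$, $\Pr\{\|w_t-w^0\|<\epsilon\}\ge p_w(\epsilon)$. Persistent excitation assumption: there exist $\tau>0$, $\beta>0$ and an integer $N_u\ge\lceil p/n_x\rceil$ such that for every $t\ge0$, $\|D_t\|\le\tau$ and $\sum_{j=t}^{t+N_u-1}D_j^\top D_j\succeq\beta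 I$. *)

theory Defs
  imports "HOL-Probability.Probability"
begin

definition poly_set :: "real^'n^'m \<Rightarrow> real^'m \<Rightarrow> (real^'n) set" where
  "poly_set Pw pw = {w. \<forall>i. (Pw *v w) $ i \<le> pw $ i}"

definition unfalsified_set ::
  "(nat \<Rightarrow> real^'p^'n) \<Rightarrow> ('a \<Rightarrow> nat \<Rightarrow> real^'n) \<Rightarrow> (real^'n) set \<Rightarrow> real^'p
    \<Rightarrow> nat \<Rightarrow> 'a \<Rightarrow> (real^'p) set" where
  "unfalsified_set D w W thetastar t x =
     {theta. D (t - 1) *v (thetastar - theta) + w x (t - 1) \<in> W}"

definition min_param_set ::
  "(real^'p) set \<Rightarrow> (nat \<Rightarrow> real^'p^'n) \<Rightarrow> ('a \<Rightarrow> nat \<Rightarrow> real^'n) \<Rightarrow> (real^'n) set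
    \<Rightarrow> real^'p \<Rightarrow> nat \<Rightarrow> 'a \<Rightarrow> (real^'p) set" where
  "min_param_set Theta0 D w W thetastar t x =
     Theta0 \<inter> (\<Inter>j\<in>{1..t}. unfalsified_set D w W thetastar j x)"

end

theory Submission
  imports Defs
begin

text \<open>Write \<open>v = \<theta>\<^sup>* - \<theta>\<close> for the parameter error. Persistent excitation gives, in every window
  of length \<open>N\<close>, some \<open>j\<close> with \<open>norm (D j v) \<ge> sqrt (\<beta> / N) * norm v\<close>. For such \<open>j\<close>, if the
  disturbance \<open>w j\<close> falls near the point of \<open>\<partial>W\<close> that maximizes \<open>\<langle>D j v, \<cdot>\<rangle>\<close>, then
  \<open>D j v + w j\<close> leaves \<open>W\<close>, and so does \<open>D j v' + w j\<close> for all \<open>v'\<close> near \<open>v\<close>. The tight bound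
  assumption makes this event uniformly likely, so by independence it happens for infinitely
  many \<open>j\<close> almost surely. A finite cover of each compact annulus of errors, and a countable
  sequence of annuli, then falsify every \<open>v \<noteq> 0\<close> simultaneously; errors with
  \<open>sqrt (\<beta> / N) * norm v > 2 * R\<close>, where \<open>W \<subseteq> cball 0 R\<close>, are falsified deterministically.\<close>

lemma (in prob_space) AE_ex_hit_of_indep_vars:
  fixes J :: "'i::countable set"
  assumes indep: "indep_vars N X I" and J: "J \<subseteq> I" "infinite J" and p: "0 < p"
    and S: "\<And>j. j \<in> J \<Longrightarrow> S j \<in> sets (N j)"
    and hit: "\<And>j. j \<in> J \<Longrightarrow> p \<le> prob (X j -` S j \<inter> space M)"
  shows "AE x in M. \<exists>j\<in>J. X j x \<in> S j"
proof -
  define miss where "miss j = X j -` (space (N j) - S j) \<inter> space M" for j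
  have X_meas: "X j \<in> measurable M (N j)" if "j \<in> J" for j
    using indep J that unfolding indep_vars_def2 by auto
  have miss_eq: "miss j = space M - (X j -` S j \<inter> space M)" if "j \<in> J" for j
    using measurable_space[OF X_meas[OF that]] unfolding miss_def by auto
  have miss_events: "miss j \<in> events" if "j \<in> J" for j
    using measurable_sets[OF X_meas[OF that]] S[OF that] unfolding miss_def by auto
  have prob_miss: "prob (miss j) \<le> 1 - p" if "j \<in> J" for j
    using hit[OF that] measurable_sets[OF X_meas[OF that] S[OF that]]
    by (simp add: miss_eq[OF that] prob_compl)
  define never where "never = (\<Inter>j\<in>J. miss j)"
  have "J \<noteq> {}" using J by auto
  then have never_events: "never \<in> events"
    unfolding never_def using miss_events by blast
  have never_le: "prob never \<le> (1 - p) ^ n" if "0 < n" for n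
  proof -
    obtain F where F: "finite F" "card F = n" "F \<subseteq> J"
      using infinite_arbitrarily_large[OF J(2)] by blast
    then have "F \<noteq> {}" using that by auto
    have "prob never \<le> prob (\<Inter>j\<in>F. miss j)"
      using F \<open>F \<noteq> {}\<close> miss_events
      by (intro finite_measure_mono) (auto simp: never_def intro!: sets.finite_INT)
    also have "\<dots> = (\<Prod>j\<in>F. prob (miss j))"
      unfolding miss_def using F \<open>F \<noteq> {}\<close> J S
      by (intro indep_varsD[OF indep]) auto
    also have "\<dots> \<le> (\<Prod>j\<in>F. 1 - p)"
      using F prob_miss by (intro prod_mono) auto
    finally show ?thesis using F by simp
  qed
  have "prob never = 0"
  proof (rule ccontr)
    assume "prob never \<noteq> 0"
    then have "0 < prob never" using measure_nonneg[of M never] by linarith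
    moreover have "1 - p < 1" using p by simp
    ultimately obtain n where n: "(1 - p) ^ n < prob never"
      using real_arch_pow_inv by blast
    have "0 < n" using n prob_le_1[of never] by (cases n) auto
    then show False using never_le[of n] n by linarith
  qed
  then have "never \<in> null_sets M"
    using never_events by (simp add: null_setsI emeasure_eq_measure)
  then show ?thesis
    by (rule AE_I') (auto simp: never_def miss_def dest: measurable_space[OF X_meas])
qed

lemma compact_frontier_maximizer:
  fixes S :: "'a::real_inner set"
  assumes "compact S" "S \<noteq> {}" "u \<noteq> 0"
  shows "\<exists>y\<in>frontier S. \<forall>z\<in>S. u \<bullet> z \<le> u \<bullet> y"
proof -
  have "continuous_on S (\<lambda>z. u \<bullet> z)"
    by (intro continuous_intros)
  then obtain y where y: "y \<in> S" "\<forall>z\<in>S. u \<bullet> z \<le> u \<bullet> y"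
    using continuous_attains_sup[OF assms(1,2)] by blast
  have "y \<notin> interior S"
  proof
    assume "y \<in> interior S"
    then obtain e where e: "0 < e" "ball y e \<subseteq> S"
      using mem_interior by blast
    define z where "z = y + (e / (2 * norm u)) *\<^sub>R u"
    have "dist y z < e"
      using e assms(3) by (simp add: z_def dist_norm)
    then have "u \<bullet> z \<le> u \<bullet> y"
      using e y by auto
    moreover have "u \<bullet> z = u \<bullet> y + e / (2 * norm u) * (u \<bullet> u)"
      by (simp add: z_def inner_add_right)
    moreover have "0 < e / (2 * norm u) * (u \<bullet> u)"
      using e assms(3) by simp
    ultimately show False by linarith
  qed
  then show ?thesis
    using y closure_subset unfolding frontier_def by blast
qed

lemma shift_past_maximizer_not_in:
  fixes u :: "'a::real_inner"
  assumes max: "\<forall>z\<in>S. u \<bullet> z \<le> u \<bullet> y"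
    and small: "norm (x - y) + norm d < norm u"
  shows "x + u + d \<notin> S"
proof
  assume "x + u + d \<in> S"
  then have "u \<bullet> (x + u + d) \<le> u \<bullet> y"
    using max by blast
  moreover have "u \<bullet> (x + u + d) = u \<bullet> y + u \<bullet> (x - y) + norm u * norm u + u \<bullet> d"
    by (simp add: inner_add_right inner_diff_right flip: power2_norm_eq_inner power2_eq_square)
  moreover have "- (norm u * norm (x - y)) \<le> u \<bullet> (x - y)" "- (norm u * norm d) \<le> u \<bullet> d"
    using Cauchy_Schwarz_ineq2[of u "x - y"] Cauchy_Schwarz_ineq2[of u d] by linarith+
  moreover have "norm u * (norm (x - y) + norm d) < norm u * norm u"
  proof (rule mult_strict_left_mono[OF small])
    show "0 < norm u"
      using small norm_ge_zero[of "x - y"] norm_ge_zero[of d] by linarith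
  qed
  ultimately show False
    by (simp add: distrib_left)
qed

lemma AE_all_in_compact_of_local:
  fixes K :: "'b::metric_space set"
  assumes "compact K"
    and local: "\<And>y. y \<in> K \<Longrightarrow> \<exists>\<rho>>0. AE x in M. \<forall>z\<in>ball y \<rho>. P x z"
  shows "AE x in M. \<forall>z\<in>K. P x z"
proof -
  obtain \<rho> where \<rho>: "\<And>y. y \<in> K \<Longrightarrow> 0 < \<rho> y"
    "\<And>y. y \<in> K \<Longrightarrow> AE x in M. \<forall>z\<in>ball y (\<rho> y). P x z"
    using local by metis
  obtain F where F: "F \<subseteq> K" "finite F" "K \<subseteq> (\<Union>y\<in>F. ball y (\<rho> y))"
    using compactE_image[OF assms(1), of K "\<lambda>y. ball y (\<rho> y)"] \<rho>(1) by force
  have "AE x in M. \<forall>y\<in>F. \<forall>z\<in>ball y (\<rho> y). P x z"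
    by (rule AE_finite_allI[OF F(2)]) (use F \<rho>(2) in auto)
  then show ?thesis
    by eventually_elim (use F(3) in blast)
qed

locale persistently_excited_estimation = prob_space M
  for M :: "'a measure" and w :: "'a \<Rightarrow> nat \<Rightarrow> 'n::euclidean_space"
    and W :: "'n set" and D :: "nat \<Rightarrow> 'p::euclidean_space \<Rightarrow> 'n"
    and \<tau> \<beta> :: real and N :: nat +
  assumes w_indep: "indep_vars (\<lambda>_. borel) (\<lambda>t x. w x t) UNIV"
    and W_compact: "compact W"
    and w_in_W: "x \<in> space M \<Longrightarrow> w x t \<in> W"
    and tight: "0 < \<epsilon> \<Longrightarrow>
      \<exists>p>0. \<forall>y\<in>frontier W. \<forall>t. p \<le> prob {x \<in> space M. norm (w x t - y) < \<epsilon>}"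
    and D_linear: "linear (D t)"
    and D_bounded: "norm (D t v) \<le> \<tau> * norm v"
    and \<tau>_pos: "0 < \<tau>"
    and \<beta>_pos: "0 < \<beta>"
    and excitation: "\<beta> * (norm v)\<^sup>2 \<le> (\<Sum>j\<in>{t..<t+N}. (norm (D j v))\<^sup>2)"
begin

lemma window_length_pos: "0 < N"
proof (rule ccontr)
  assume "\<not> 0 < N"
  obtain b :: 'p where "b \<in> Basis"
    using nonempty_Basis by blast
  then show False
    using excitation[of b 0] \<beta>_pos \<open>\<not> 0 < N\<close> by auto
qed

lemma excited_in_window: "\<exists>j\<in>{t..<t+N}. sqrt (\<beta> / N) * norm v \<le> norm (D j v)"
proof (rule ccontr)
  assume "\<not> ?thesis"
  then have "(norm (D j v))\<^sup>2 < (sqrt (\<beta> / N) * norm v)\<^sup>2" if "j \<in> {t..<t+N}" for j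
    using that by (intro power_strict_mono) (auto simp: not_le)
  then have "(\<Sum>j\<in>{t..<t+N}. (norm (D j v))\<^sup>2) < (\<Sum>j\<in>{t..<t+N}. (sqrt (\<beta> / N) * norm v)\<^sup>2)"
    using window_length_pos by (intro sum_strict_mono) auto
  also have "\<dots> = \<beta> * (norm v)\<^sup>2"
    using window_length_pos \<beta>_pos by (simp add: power_mult_distrib)
  finally show False
    using excitation[of v t] by linarith
qed

lemma excited_infinitely_often: "infinite {j. sqrt (\<beta> / N) * norm v \<le> norm (D j v)}"
  unfolding infinite_nat_iff_unbounded_le
  using excited_in_window by fastforce

lemma falsified_near_maximizer:
  assumes max: "\<forall>z\<in>W. D j v \<bullet> z \<le> D j v \<bullet> c"
    and excited: "s \<le> norm (D j v)"
    and close: "norm (y - c) < s / 4"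
    and near: "v' \<in> ball v (s / (2 * \<tau>))"
  shows "D j v' + y \<notin> W"
proof -
  have "0 < s"
    using close norm_ge_zero[of "y - c"] by linarith
  have "\<tau> * norm (v' - v) < s / 2"
    using near \<tau>_pos by (simp add: dist_norm norm_minus_commute field_simps)
  then have "norm (D j (v' - v)) < s / 2"
    using D_bounded[of j "v' - v"] by linarith
  then have "norm (y - c) + norm (D j (v' - v)) < norm (D j v)"
    using close excited \<open>0 < s\<close> by linarith
  then have "y + D j v + D j (v' - v) \<notin> W"
    by (rule shift_past_maximizer_not_in[OF max])
  moreover have "y + D j v + D j (v' - v) = D j v' + y"
    using D_linear[of j] by (simp add: linear_diff)
  ultimately show ?thesis
    by simp
qed

lemma AE_falsified_near:
  assumes "v \<noteq> 0"
  shows "\<exists>\<rho>>0. AE x in M. \<forall>v'\<in>ball v \<rho>. \<exists>j. D j v' + w x j \<notin> W"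
proof -
  define s where "s = sqrt (\<beta> / N) * norm v"
  have s_pos: "0 < s"
    using assms \<beta>_pos window_length_pos by (simp add: s_def)
  define J where "J = {j. s \<le> norm (D j v)}"
  have "W \<noteq> {}"
    using w_in_W not_empty by blast
  have "\<exists>y\<in>frontier W. \<forall>z\<in>W. D j v \<bullet> z \<le> D j v \<bullet> y" if "j \<in> J" for j
    using that s_pos W_compact \<open>W \<noteq> {}\<close> by (intro compact_frontier_maximizer) (auto simp: J_def)
  then obtain c where c: "\<And>j. j \<in> J \<Longrightarrow> c j \<in> frontier W"
    "\<And>j. j \<in> J \<Longrightarrow> \<forall>z\<in>W. D j v \<bullet> z \<le> D j v \<bullet> c j"
    by metis
  obtain p where p: "0 < p" "\<forall>y\<in>frontier W. \<forall>t. p \<le> prob {x \<in> space M. norm (w x t - y) < s / 4}"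
    using tight[of "s / 4"] s_pos by auto
  have "AE x in M. \<exists>j\<in>J. w x j \<in> ball (c j) (s / 4)"
  proof (rule AE_ex_hit_of_indep_vars[OF w_indep _ _ p(1)])
    show "infinite J"
      using excited_infinitely_often[of v] by (simp add: J_def s_def)
    fix j assume "j \<in> J"
    have "(\<lambda>x. w x j) -` ball (c j) (s / 4) \<inter> space M = {x \<in> space M. norm (w x j - c j) < s / 4}"
      by (auto simp: dist_norm norm_minus_commute)
    then show "p \<le> prob ((\<lambda>x. w x j) -` ball (c j) (s / 4) \<inter> space M)"
      using p(2) c(1)[OF \<open>j \<in> J\<close>] by simp
  qed auto
  then have "AE x in M. \<forall>v'\<in>ball v (s / (2 * \<tau>)). \<exists>j. D j v' + w x j \<notin> W"
  proof eventually_elim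
    case (elim x)
    then obtain j where j: "j \<in> J" "norm (w x j - c j) < s / 4"
      by (auto simp: dist_norm norm_minus_commute)
    show ?case
    proof
      fix v' assume "v' \<in> ball v (s / (2 * \<tau>))"
      then have "D j v' + w x j \<notin> W"
        using falsified_near_maximizer[OF c(2)[OF j(1)] _ j(2)] j(1) by (simp add: J_def)
      then show "\<exists>j. D j v' + w x j \<notin> W" ..
    qed
  qed
  then show ?thesis
    using s_pos \<tau>_pos by (intro exI[of _ "s / (2 * \<tau>)"]) auto
qed

lemma falsified_if_large:
  assumes "x \<in> space M" and R: "\<forall>y\<in>W. norm y \<le> R" and large: "2 * R < sqrt (\<beta> / N) * norm v"
  shows "\<exists>j. D j v + w x j \<notin> W"
proof -
  obtain j where j: "sqrt (\<beta> / N) * norm v \<le> norm (D j v)"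
    using excited_in_window[of 0 v] by auto
  have "norm (D j v) \<le> norm (D j v + w x j) + norm (w x j)"
    by (metis add_diff_cancel_right' norm_triangle_ineq4)
  moreover have "norm (w x j) \<le> R"
    using R w_in_W[OF assms(1)] by blast
  ultimately have "R < norm (D j v + w x j)"
    using large j by linarith
  then have "D j v + w x j \<notin> W"
    using R by (meson not_le)
  then show ?thesis ..
qed

lemma AE_falsified_annulus:
  assumes "0 < r"
  shows "AE x in M. \<forall>v\<in>cball 0 R - ball 0 r. \<exists>j. D j v + w x j \<notin> W"
proof (rule AE_all_in_compact_of_local)
  show "compact (cball 0 R - ball (0::'p) r)"
    unfolding Diff_eq by (intro compact_Int_closed compact_cball closed_Compl open_ball)
  show "\<exists>\<rho>>0. AE x in M. \<forall>v'\<in>ball v \<rho>. \<exists>j. D j v' + w x j \<notin> W"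
    if "v \<in> cball 0 R - ball 0 r" for v
    using that assms by (intro AE_falsified_near) auto
qed

theorem AE_unfalsified_errors_vanish:
  "AE x in M. \<forall>v. (\<forall>j. D j v + w x j \<in> W) \<longrightarrow> v = 0"
proof -
  obtain R where R: "\<forall>y\<in>W. norm y \<le> R"
    using compact_imp_bounded[OF W_compact] bounded_iff by blast
  define \<kappa> where "\<kappa> = sqrt (\<beta> / N)"
  have \<kappa>_pos: "0 < \<kappa>"
    using \<beta>_pos window_length_pos by (simp add: \<kappa>_def)
  have "AE x in M. \<forall>n::nat. \<forall>v\<in>cball 0 (2 * R / \<kappa>) - ball 0 (inverse (Suc n)).
          \<exists>j. D j v + w x j \<notin> W"
    unfolding AE_all_countable by (intro allI AE_falsified_annulus) simp
  then show ?thesis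
    using AE_space
  proof eventually_elim
    case (elim x)
    show ?case
    proof (intro allI impI)
      fix v assume unfalsified: "\<forall>j. D j v + w x j \<in> W"
      show "v = 0"
      proof (rule ccontr)
        assume "v \<noteq> 0"
        then obtain n where "inverse (real (Suc n)) < norm v"
          using reals_Archimedean[of "norm v"] by auto
        moreover have "\<kappa> * norm v \<le> 2 * R"
          using falsified_if_large[OF elim(2) R, of v] unfalsified unfolding \<kappa>_def by (meson not_le)
        ultimately have "v \<in> cball 0 (2 * R / \<kappa>) - ball 0 (inverse (Suc n))"
          using \<kappa>_pos by (simp add: pos_le_divide_eq mult.commute)
        then show False
          using elim(1) unfalsified by blast
      qed
    qed
  qed
qed

end

lemma inner_sum_gram_mult:
  fixes D :: "nat \<Rightarrow> real^'p^'n"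
  shows "v \<bullet> ((\<Sum>j\<in>S. transpose (D j) ** D j) *v v) = (\<Sum>j\<in>S. (norm (D j *v v))\<^sup>2)"
proof (induction S rule: infinite_finite_induct)
  case (insert j S)
  have "v \<bullet> ((transpose (D j) ** D j) *v v) = (norm (D j *v v))\<^sup>2"
    by (simp add: power2_norm_eq_inner flip: matrix_vector_mul_assoc)
       (metis dot_lmul_matrix inner_commute)
  then show ?case
    using insert by (simp add: matrix_vector_mult_add_rdistrib inner_add_right)
qed auto

lemma all_atLeastAtMost_shift_iff:
  "(\<forall>t. \<forall>j\<in>{1..t}. P (j - 1)) \<longleftrightarrow> (\<forall>j::nat. P j)"
proof
  assume "\<forall>t. \<forall>j\<in>{1..t}. P (j - 1)"
  moreover have "Suc j \<in> {1..Suc j}" for j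
    by simp
  ultimately have "P (Suc j - 1)" for j
    by blast
  then show "\<forall>j. P j"
    by simp
qed simp

lemma Inter_min_param_set:
  "(\<Inter>t. min_param_set Theta0 D w W thetastar t x) =
     {\<theta> \<in> Theta0. \<forall>j. D j *v (thetastar - \<theta>) + w x j \<in> W}"
proof (rule set_eqI)
  fix \<theta>
  have "\<theta> \<in> (\<Inter>t. min_param_set Theta0 D w W thetastar t x) \<longleftrightarrow>
      \<theta> \<in> Theta0 \<and> (\<forall>t. \<forall>j\<in>{1..t}. D (j - 1) *v (thetastar - \<theta>) + w x (j - 1) \<in> W)"
    by (simp add: min_param_set_def unfalsified_set_def)
  also have "\<dots> \<longleftrightarrow> \<theta> \<in> {\<theta> \<in> Theta0. \<forall>j. D j *v (thetastar - \<theta>) + w x j \<in> W}"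
    using all_atLeastAtMost_shift_iff[of "\<lambda>j. D j *v (thetastar - \<theta>) + w x j \<in> W"] by simp
  finally show "\<theta> \<in> (\<Inter>t. min_param_set Theta0 D w W thetastar t x) \<longleftrightarrow> \<dots>" .
qed

lemma matrix_persistently_excited_estimation:
  fixes D :: "nat \<Rightarrow> real^'p^'n" and w :: "'a \<Rightarrow> nat \<Rightarrow> real^'n"
  assumes "prob_space M" and w_indep: "prob_space.indep_vars M (\<lambda>_. borel) (\<lambda>t x. w x t) UNIV"
    and "compact W" and w_in_W: "\<And>x t. x \<in> space M \<Longrightarrow> w x t \<in> W"
    and p_w_pos: "\<And>\<epsilon>. 0 < \<epsilon> \<Longrightarrow> 0 < p_w \<epsilon>"
    and p_w_le: "\<And>y \<epsilon> t. y \<in> frontier W \<Longrightarrow> 0 < \<epsilon> \<Longrightarrow>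
      p_w \<epsilon> \<le> measure M {x \<in> space M. norm (w x t - y) < \<epsilon>}"
    and "0 < \<tau>" and onorm_le: "\<And>t. onorm (\<lambda>v. D t *v v) \<le> \<tau>"
    and "0 < \<beta>" and gram: "\<And>t v. \<beta> * (v \<bullet> v) \<le> v \<bullet> ((\<Sum>j\<in>{t..<t+N}. transpose (D j) ** D j) *v v)"
  shows "persistently_excited_estimation M w W (\<lambda>t v. D t *v v) \<tau> \<beta> N"
proof (intro persistently_excited_estimation.intro persistently_excited_estimation_axioms.intro)
  show "prob_space M" "0 < \<tau>" "0 < \<beta>" "compact W"
    by fact+
  show "prob_space.indep_vars M (\<lambda>_. borel) (\<lambda>t x. w x t) UNIV"
    by (rule w_indep)
  show "w x t \<in> W" if "x \<in> space M" for x t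
    using that by (rule w_in_W)
  show "linear (\<lambda>v. D t *v v)" for t
    by (rule matrix_vector_mul_linear)
  show "\<exists>p>0. \<forall>y\<in>frontier W. \<forall>t. p \<le> measure M {x \<in> space M. norm (w x t - y) < \<epsilon>}"
    if "0 < \<epsilon>" for \<epsilon>
    using that p_w_pos p_w_le by blast
  show "norm (D t *v v) \<le> \<tau> * norm v" for t v
  proof -
    have "norm (D t *v v) \<le> onorm (\<lambda>v. D t *v v) * norm v"
      by (rule onorm) simp
    also have "\<dots> \<le> \<tau> * norm v"
      using onorm_le by (rule mult_right_mono) simp
    finally show ?thesis .
  qed
  show "\<beta> * (norm v)\<^sup>2 \<le> (\<Sum>j\<in>{t..<t+N}. (norm (D j *v v))\<^sup>2)" for t v
    using gram[of v t] by (simp add: inner_sum_gram_mult power2_norm_eq_inner)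
qed

theorem corollary2:
  fixes M :: "'a measure"
    and w :: "'a \<Rightarrow> nat \<Rightarrow> real^'n"
    and D :: "nat \<Rightarrow> real^'p^'n"
    and Theta0 :: "(real^'p) set"
    and thetastar :: "real^'p"
    and Pw :: "real^'n^'m" and pw :: "real^'m"
  assumes "prob_space M"
    and Theta0: "polytope Theta0" "thetastar \<in> Theta0"
    and W_compact: "compact (poly_set Pw pw)"
    and pw_pos: "\<forall>i. pw $ i > 0"
    and w_meas: "\<And>t. (\<lambda>x. w x t) \<in> borel_measurable M"
    and w_indep: "prob_space.indep_vars M (\<lambda>_. borel) (\<lambda>t x. w x t) UNIV"
    and w_in_W: "\<And>t x. x \<in> space M \<Longrightarrow> w x t \<in> poly_set Pw pw"
    and tight: "\<exists>p_w :: real \<Rightarrow> real. (\<forall>\<epsilon>>0. 0 < p_w \<epsilon> \<and> p_w \<epsilon> \<le> 1) \<and>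
       (\<forall>w0\<in>frontier (poly_set Pw pw). \<forall>\<epsilon>>0. \<forall>t.
          measure M {x \<in> space M. norm (w x t - w0) < \<epsilon>} \<ge> p_w \<epsilon>)"
    and PE: "\<exists>\<tau>>0. \<exists>\<beta>>0. \<exists>Nu::nat.
       real Nu \<ge> of_int \<lceil>real CARD('p) / real CARD('n)\<rceil> \<and>
       (\<forall>t. onorm (\<lambda>v. D t *v v) \<le> \<tau> \<and>
          (\<forall>v. v \<bullet> ((\<Sum>j\<in>{t..<t+Nu}. transpose (D j) ** D j) *v v) \<ge> \<beta> * (v \<bullet> v)))"
  shows "AE x in M. (\<Inter>t. min_param_set Theta0 D w (poly_set Pw pw) thetastar t x) = {thetastar}"
proof -
  obtain p_w :: "real \<Rightarrow> real" where p_w: "\<And>\<epsilon>. 0 < \<epsilon> \<Longrightarrow> 0 < p_w \<epsilon>"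
    "\<And>y \<epsilon> t. y \<in> frontier (poly_set Pw pw) \<Longrightarrow> 0 < \<epsilon> \<Longrightarrow>
      p_w \<epsilon> \<le> measure M {x \<in> space M. norm (w x t - y) < \<epsilon>}"
    using tight by blast
  obtain \<tau> \<beta> N where "0 < \<tau>" "\<And>t. onorm (\<lambda>v. D t *v v) \<le> \<tau>" "0 < \<beta>"
    "\<And>t v. \<beta> * (v \<bullet> v) \<le> v \<bullet> ((\<Sum>j\<in>{t..<t+N}. transpose (D j) ** D j) *v v)"
    using PE by blast
  then interpret persistently_excited_estimation M w "poly_set Pw pw" "\<lambda>t v. D t *v v" \<tau> \<beta> N
    using matrix_persistently_excited_estimation[OF assms(1) w_indep W_compact w_in_W p_w] by blast
  show ?thesis
    using AE_unfalsified_errors_vanish AE_space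
  proof eventually_elim
    case (elim x)
    have "thetastar - \<theta> = 0" if "\<forall>j. D j *v (thetastar - \<theta>) + w x j \<in> poly_set Pw pw" for \<theta>
      using elim(1) that by blast
    moreover have "\<forall>j. D j *v (thetastar - thetastar) + w x j \<in> poly_set Pw pw"
      using w_in_W[OF elim(2)] by simp
    ultimately show ?case
      using Theta0(2) unfolding Inter_min_param_set by auto
  qed
qed

end
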